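(* Let $n\ge2$, $s\ge1$, and let $f:\mathbb{R}_{\ge0}\to\mathbb{R}_{\ge0}$ be super-additive with $c_f[s]<\infty$. Let $x(1),\ldots,x(s)\in\mathbb{R}^n_{\ge0}$, $x=\sum_{j=1}^s x(j)$, and let $e_1,\ldots,e_n>0$ be fixed reals. Let $i^*=\arg\max_{i}e_i^{-1}f(x_i)$ and suppose that for some constant $C>0$, $$\sum_{i=1}^n e_i^{-1}f(x_i)\le (C\ln^2 n)\cdot e_{i^*}^{-1}f(x_{i^*})\quad\text{and}\quad f(x_{i^*})>0.$$ For each server $j$ with $\sum_i e_i^{-1}f(x_i(j))>0$, let $\mathrm{SC}_j$ be the set of values of $N$ independent draws of a random index $\mathbf{i}\in[n]$ with $\Pr[\mathbf{i}=i]=e_i^{-1}f(x_i(j))/\sum_{i'}e_{i'}^{-1}f(x_{i'}(j))$ (draws independent across servers); for other servers let $\mathrm{SC}_j=\emptyset$. If $N\ge 32C\ln^3 n\cdot c_f[s]/s$, then $i^*\in\bigcup_j \mathrm{SC}_j$ with probability at least $1-1/n^4$.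
   Context: $f$ is super-additive if $f(x+y)\ge f(x)+f(y)$ for all $x,y\ge0$. For an integer $s\ge1$, $c_f[s]$ denotes the smallest real number such that $f(y_1+\cdots+y_s)\le\frac{c_f[s]}{s}\big(\sqrt{f(y_1)}+\cdots+\sqrt{f(y_s)}\big)^2$ for all $y_1,\ldots,y_s\ge0$. $\ln$ is the natural logarithm. *)

theory Defs
  imports "HOL-Probability.Probability"
begin

definition superadditive :: "(real \<Rightarrow> real) \<Rightarrow> bool" where
  "superadditive f \<longleftrightarrow> (\<forall>x y. 0 \<le> x \<longrightarrow> 0 \<le> y \<longrightarrow> f x + f y \<le> f (x + y))"

definition cf_admissible :: "(real \<Rightarrow> real) \<Rightarrow> nat \<Rightarrow> real \<Rightarrow> bool" where
  "cf_admissible f s c \<longleftrightarrow>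
     (\<forall>y :: nat \<Rightarrow> real. (\<forall>j<s. 0 \<le> y j) \<longrightarrow>
        f (\<Sum>j<s. y j) \<le> c / real s * (\<Sum>j<s. sqrt (f (y j)))\<^sup>2)"

(* c_f[s]: the smallest admissible constant (meaningful when one exists, i.e. c_f[s] < \<infinity>) *)
definition cf :: "(real \<Rightarrow> real) \<Rightarrow> nat \<Rightarrow> real" where
  "cf f s = Inf {c. cf_admissible f s c}"

definition draw_pmf :: "nat \<Rightarrow> (nat \<Rightarrow> real) \<Rightarrow> nat pmf" where
  "draw_pmf n w = embed_pmf (\<lambda>i. if i < n then w i / (\<Sum>i'<n. w i') else 0)"

definition SC_pmf :: "nat \<Rightarrow> nat \<Rightarrow> (nat \<Rightarrow> real) \<Rightarrow> nat set pmf" where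
  "SC_pmf n N w =
     (if 0 < (\<Sum>i<n. w i)
      then map_pmf (\<lambda>d. d ` {..<N}) (Pi_pmf {..<N} 0 (\<lambda>_. draw_pmf n w))
      else return_pmf {})"

(* joint distribution of (SC_j)_{j<s}, independent across servers;
   x j i is coordinate i of the vector x(j) *)
definition all_SC_pmf :: "nat \<Rightarrow> nat \<Rightarrow> nat \<Rightarrow> (real \<Rightarrow> real) \<Rightarrow> (nat \<Rightarrow> real)
                          \<Rightarrow> (nat \<Rightarrow> nat \<Rightarrow> real) \<Rightarrow> (nat \<Rightarrow> nat set) pmf" where
  "all_SC_pmf n s N f e x = Pi_pmf {..<s} {} (\<lambda>j. SC_pmf n N (\<lambda>i. f (x j i) / e i))"

end

theory Submission
  imports Defs
begin

text \<open>
  Server \<open>j\<close> hits \<open>i\<^sup>*\<close> in one draw with probability \<open>p\<^sub>j = a\<^sub>j / W\<^sub>j\<close>, where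
  \<open>a\<^sub>j = f(x\<^sub>i\<^sub>*(j)) / e\<^sub>i\<^sub>*\<close> and \<open>W\<^sub>j\<close> is the total weight of server \<open>j\<close>; so all \<open>sN\<close> draws
  miss \<open>i\<^sup>*\<close> with probability \<open>\<Prod>\<^sub>j (1 - p\<^sub>j)\<^sup>N \<le> exp (-N \<Sum>\<^sub>j p\<^sub>j)\<close>.
  By Cauchy-Schwarz \<open>(\<Sum>\<^sub>j \<surd>a\<^sub>j)\<^sup>2 \<le> (\<Sum>\<^sub>j p\<^sub>j)(\<Sum>\<^sub>j W\<^sub>j)\<close>; super-additivity bounds \<open>\<Sum>\<^sub>j W\<^sub>j\<close> by
  \<open>\<Sum>\<^sub>i f(x\<^sub>i)/e\<^sub>i \<le> C ln\<^sup>2 n \<cdot> f(x\<^sub>i\<^sub>*)/e\<^sub>i\<^sub>*\<close>, and the definition of \<open>c\<^sub>f[s]\<close> bounds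
  \<open>f(x\<^sub>i\<^sub>*) \<le> c\<^sub>f[s]/s \<cdot> (\<Sum>\<^sub>j \<surd>f(x\<^sub>i\<^sub>*(j)))\<^sup>2\<close>. Together, \<open>\<Sum>\<^sub>j p\<^sub>j \<ge> s / (c\<^sub>f[s] C ln\<^sup>2 n)\<close>, so the
  choice of \<open>N\<close> makes \<open>N \<Sum>\<^sub>j p\<^sub>j \<ge> 32 ln n\<close>.
\<close>

lemma superadditive_sum_le:
  assumes "superadditive f" and f_nonneg: "\<And>t. 0 \<le> t \<Longrightarrow> 0 \<le> f t"
    and "finite J" and "\<And>j. j \<in> J \<Longrightarrow> 0 \<le> y j"
  shows "(\<Sum>j\<in>J. f (y j)) \<le> f (\<Sum>j\<in>J. y j)"
  using \<open>finite J\<close> assms(4)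
proof (induction J rule: finite_induct)
  case empty
  then show ?case using f_nonneg by simp
next
  case (insert a J)
  have "0 \<le> y a" and "0 \<le> (\<Sum>j\<in>J. y j)"
    using insert.prems by (auto intro: sum_nonneg)
  then have "f (y a) + f (\<Sum>j\<in>J. y j) \<le> f (y a + (\<Sum>j\<in>J. y j))"
    using \<open>superadditive f\<close> unfolding superadditive_def by blast
  with insert show ?case by simp
qed

lemma cf_admissible_cf:
  assumes "\<exists>c. cf_admissible f s c" and "s \<ge> 1"
  shows "cf_admissible f s (cf f s)"
  unfolding cf_admissible_def
proof (intro allI impI)
  fix y :: "nat \<Rightarrow> real"
  assume y: "\<forall>j<s. 0 \<le> y j"
  define K where "K = (\<Sum>j<s. sqrt (f (y j)))\<^sup>2"
  have s: "real s > 0" using \<open>s \<ge> 1\<close> by simp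
  have bound: "f (\<Sum>j<s. y j) \<le> c / real s * K" if "cf_admissible f s c" for c
    using that y unfolding cf_admissible_def K_def by blast
  obtain c0 where c0: "cf_admissible f s c0" using assms(1) by blast
  show "f (\<Sum>j<s. y j) \<le> cf f s / real s * (\<Sum>j<s. sqrt (f (y j)))\<^sup>2"
  proof (cases "K = 0")
    case True
    then show ?thesis using bound[OF c0] by (simp add: K_def)
  next
    case False
    then have K: "K > 0" by (simp add: K_def)
    have "f (\<Sum>j<s. y j) * real s / K \<le> cf f s"
      unfolding cf_def
    proof (rule cInf_greatest)
      show "{c. cf_admissible f s c} \<noteq> {}" using c0 by blast
    next
      fix c assume "c \<in> {c. cf_admissible f s c}"
      then show "f (\<Sum>j<s. y j) * real s / K \<le> c"
        using bound[of c] s K by (simp add: field_simps)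
    qed
    then show ?thesis using s K by (simp add: K_def[symmetric] field_simps)
  qed
qed

text \<open>Cauchy-Schwarz with the convention \<open>0 / 0 = 0\<close>, which is harmless since \<open>a j \<le> W j\<close>.\<close>

lemma sum_sqrt_squared_le_sum_ratio_mult_sum:
  fixes a W :: "'a \<Rightarrow> real"
  assumes "\<And>j. j \<in> J \<Longrightarrow> 0 \<le> a j" and "\<And>j. j \<in> J \<Longrightarrow> a j \<le> W j"
  shows "(\<Sum>j\<in>J. sqrt (a j))\<^sup>2 \<le> (\<Sum>j\<in>J. a j / W j) * (\<Sum>j\<in>J. W j)"
proof -
  have W: "0 \<le> W j" "0 \<le> a j / W j" if "j \<in> J" for j
    using assms[OF that] by auto
  have "sqrt (a j) = sqrt (a j / W j) * sqrt (W j)" if "j \<in> J" for j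
    using assms[OF that] by (cases "W j = 0") (auto simp: real_sqrt_mult[symmetric])
  then have "(\<Sum>j\<in>J. sqrt (a j))\<^sup>2 = (\<Sum>j\<in>J. sqrt (a j / W j) * sqrt (W j))\<^sup>2"
    by (simp cong: sum.cong)
  also have "\<dots> \<le> (\<Sum>j\<in>J. (sqrt (a j / W j))\<^sup>2) * (\<Sum>j\<in>J. (sqrt (W j))\<^sup>2)"
    by (rule Cauchy_Schwarz_ineq_sum)
  also have "\<dots> = (\<Sum>j\<in>J. a j / W j) * (\<Sum>j\<in>J. W j)"
    using W by simp
  finally show ?thesis .
qed

lemma prod_one_minus_power_le_exp:
  fixes p :: "'a \<Rightarrow> real"
  assumes "finite J" and "\<And>j. j \<in> J \<Longrightarrow> 0 \<le> p j \<and> p j \<le> 1"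
  shows "(\<Prod>j\<in>J. (1 - p j) ^ N) \<le> exp (- (real N * (\<Sum>j\<in>J. p j)))"
proof -
  have "(\<Prod>j\<in>J. (1 - p j) ^ N) \<le> (\<Prod>j\<in>J. exp (- p j) ^ N)"
    using assms(2) exp_ge_add_one_self[of "- p _"]
    by (intro prod_mono conjI power_mono) auto
  also have "\<dots> = exp (- (real N * (\<Sum>j\<in>J. p j)))"
    using \<open>finite J\<close>
    by (simp add: exp_of_nat_mult[symmetric] exp_sum[symmetric] sum_negf sum_distrib_left)
  finally show ?thesis .
qed

lemma prod_one_minus_power_le_inverse_power:
  fixes p :: "'a \<Rightarrow> real"
  assumes "finite J" and "\<And>j. j \<in> J \<Longrightarrow> 0 \<le> p j \<and> p j \<le> 1"
    and "0 < b" and "real d * ln b \<le> real N * (\<Sum>j\<in>J. p j)"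
  shows "(\<Prod>j\<in>J. (1 - p j) ^ N) \<le> 1 / b ^ d"
proof -
  have "(\<Prod>j\<in>J. (1 - p j) ^ N) \<le> exp (- (real N * (\<Sum>j\<in>J. p j)))"
    using assms(1,2) by (rule prod_one_minus_power_le_exp)
  also have "\<dots> \<le> exp (- ln (b ^ d))"
    using assms(3,4) by (simp add: ln_realpow)
  also have "\<dots> = 1 / b ^ d"
    using \<open>0 < b\<close> by (simp add: exp_minus inverse_eq_divide)
  finally show ?thesis .
qed

lemma pmf_draw_pmf:
  assumes "\<And>i. i < n \<Longrightarrow> 0 \<le> w i" and "0 < (\<Sum>i<n. w i)" and "k < n"
  shows "pmf (draw_pmf n w) k = w k / (\<Sum>i<n. w i)"
proof -
  define g where "g i = (if i < n then w i / (\<Sum>i'<n. w i') else 0)" for i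
  have g_nonneg: "0 \<le> g i" for i
    using assms by (simp add: g_def)
  have "(\<integral>\<^sup>+i. ennreal (g i) \<partial>count_space UNIV) = (\<Sum>i<n. ennreal (g i))"
    by (rule nn_integral_count_space') (auto simp: g_def)
  also have "\<dots> = ennreal (\<Sum>i<n. g i)"
    using g_nonneg by (simp add: sum_ennreal)
  also have "(\<Sum>i<n. g i) = 1"
    using assms(2) by (simp add: g_def sum_divide_distrib[symmetric])
  finally show ?thesis
    unfolding draw_pmf_def g_def[symmetric] using g_nonneg \<open>k < n\<close>
    by (subst pmf_embed_pmf) (auto simp: g_def)
qed

lemma prob_SC_pmf_miss:
  assumes "\<And>i. i < n \<Longrightarrow> 0 \<le> w i" and "k < n"
  shows "measure_pmf.prob (SC_pmf n N w) {S. k \<notin> S} = (1 - w k / (\<Sum>i<n. w i)) ^ N"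
proof (cases "0 < (\<Sum>i<n. w i)")
  case True
  have "(\<lambda>d. d ` {..<N}) -` {S. k \<notin> S} = Pi {..<N} (\<lambda>_. - {k})"
    by auto
  moreover have "measure_pmf.prob (draw_pmf n w) (- {k}) = 1 - pmf (draw_pmf n w) k"
    using measure_pmf.prob_compl[of "{k}" "draw_pmf n w"]
    by (simp add: Compl_eq_Diff_UNIV measure_pmf_single)
  ultimately show ?thesis
    using True pmf_draw_pmf[OF assms(1) True assms(2)]
    by (simp add: SC_pmf_def measure_Pi_pmf_Pi)
next
  case False
  then have "(\<Sum>i<n. w i) = 0"
    using assms(1) by (meson sum_nonneg lessThan_iff order.antisym not_less)
  with False show ?thesis by (simp add: SC_pmf_def)
qed

lemma prob_Pi_SC_pmf_hit:
  fixes w :: "nat \<Rightarrow> nat \<Rightarrow> real"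
  assumes "\<And>j i. j < s \<Longrightarrow> i < n \<Longrightarrow> 0 \<le> w j i" and "k < n"
  shows "measure_pmf.prob (Pi_pmf {..<s} {} (\<lambda>j. SC_pmf n N (w j))) {SC. k \<in> (\<Union>j<s. SC j)}
           = 1 - (\<Prod>j<s. (1 - w j k / (\<Sum>i<n. w j i)) ^ N)"
proof -
  let ?M = "Pi_pmf {..<s} {} (\<lambda>j. SC_pmf n N (w j))"
  have "{SC. k \<in> (\<Union>j<s. SC j)} = space ?M - Pi {..<s} (\<lambda>_. {S. k \<notin> S})"
    by auto
  then have "measure_pmf.prob ?M {SC. k \<in> (\<Union>j<s. SC j)}
               = 1 - measure_pmf.prob ?M (Pi {..<s} (\<lambda>_. {S. k \<notin> S}))"
    by (simp only:) (rule measure_pmf.prob_compl, simp)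
  also have "measure_pmf.prob ?M (Pi {..<s} (\<lambda>_. {S. k \<notin> S}))
               = (\<Prod>j<s. (1 - w j k / (\<Sum>i<n. w j i)) ^ N)"
    using assms by (subst measure_Pi_pmf_Pi) (auto intro!: prod.cong prob_SC_pmf_miss)
  finally show ?thesis .
qed

lemma sum_hit_prob_lower_bound:
  fixes x :: "nat \<Rightarrow> nat \<Rightarrow> real" and e :: "nat \<Rightarrow> real"
  assumes "s \<ge> 1"
    and f_nonneg: "\<And>t. 0 \<le> t \<Longrightarrow> 0 \<le> f t"
    and "superadditive f" and "\<exists>c. cf_admissible f s c"
    and x_nonneg: "\<And>j i. j < s \<Longrightarrow> i < n \<Longrightarrow> 0 \<le> x j i"
    and e_pos: "\<And>i. i < n \<Longrightarrow> 0 < e i"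
    and "k < n" and F_pos: "0 < f (\<Sum>j<s. x j k)"
    and total_le: "(\<Sum>i<n. f (\<Sum>j<s. x j i) / e i) \<le> B * (f (\<Sum>j<s. x j k) / e k)"
  shows "real s \<le> cf f s * B * (\<Sum>j<s. (f (x j k) / e k) / (\<Sum>i<n. f (x j i) / e i))"
proof -
  define a where "a j = f (x j k) / e k" for j
  define W where "W j = (\<Sum>i<n. f (x j i) / e i)" for j
  define P where "P = (\<Sum>j<s. a j / W j)"
  define A where "A = f (\<Sum>j<s. x j k) / e k"
  define T where "T = (\<Sum>i<n. f (\<Sum>j<s. x j i) / e i)"
  define K where "K = (\<Sum>j<s. sqrt (f (x j k)))\<^sup>2"
  have A_pos: "0 < A"
    unfolding A_def using F_pos e_pos[OF \<open>k < n\<close>] by simp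
  have w_nonneg: "0 \<le> f (x j i) / e i" if "j < s" "i < n" for j i
    using f_nonneg x_nonneg e_pos that by (simp add: less_imp_le)
  have a_le_W: "0 \<le> a j" "a j \<le> W j" if "j < s" for j
    unfolding a_def W_def using w_nonneg that \<open>k < n\<close>
    by (auto intro: member_le_sum[of k "{..<n}"])
  have P_nonneg: "0 \<le> P"
    unfolding P_def using a_le_W by (intro sum_nonneg divide_nonneg_nonneg) force+
  have F_le: "f (\<Sum>j<s. x j k) \<le> cf f s / real s * K"
    using cf_admissible_cf[OF assms(4,1), unfolded cf_admissible_def, rule_format, of "\<lambda>j. x j k"]
      x_nonneg \<open>k < n\<close> unfolding K_def by simp
  then have "0 < cf f s / real s * K"
    using F_pos by linarith
  then have cf_pos: "0 < cf f s"
    by (auto simp: zero_less_mult_iff zero_less_divide_iff K_def)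
  have "(\<Sum>j<s. W j) = (\<Sum>i<n. (\<Sum>j<s. f (x j i)) / e i)"
    unfolding W_def by (subst sum.swap) (simp add: sum_divide_distrib)
  also have "\<dots> \<le> T"
    unfolding T_def using e_pos x_nonneg
    by (intro sum_mono divide_right_mono superadditive_sum_le[OF \<open>superadditive f\<close> f_nonneg])
       (auto intro: less_imp_le)
  finally have sum_W: "(\<Sum>j<s. W j) \<le> T" .
  have "K / e k = (\<Sum>j<s. sqrt (a j))\<^sup>2"
    using e_pos[OF \<open>k < n\<close>]
    by (simp add: K_def a_def real_sqrt_divide sum_divide_distrib[symmetric] power_divide)
  also have "\<dots> \<le> P * (\<Sum>j<s. W j)"
    unfolding P_def using a_le_W by (intro sum_sqrt_squared_le_sum_ratio_mult_sum) auto
  also have "\<dots> \<le> P * T"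
    using sum_W P_nonneg by (rule mult_left_mono)
  finally have K_le: "K / e k \<le> P * T" .
  have "real s * A \<le> cf f s * (K / e k)"
    using F_le \<open>s \<ge> 1\<close> e_pos[OF \<open>k < n\<close>] by (simp add: A_def field_simps)
  also have "\<dots> \<le> cf f s * (P * T)"
    using K_le cf_pos by (rule mult_left_mono[OF _ less_imp_le])
  also have "\<dots> \<le> cf f s * (P * (B * A))"
    using total_le cf_pos P_nonneg by (intro mult_left_mono) (auto simp: T_def A_def)
  also have "\<dots> = (cf f s * B * P) * A"
    by (simp add: mult_ac)
  finally have "real s \<le> cf f s * B * P"
    using A_pos by (rule mult_right_le_imp_le)
  then show ?thesis
    by (simp add: P_def a_def W_def)
qed

theorem lemma4p1:
  fixes n s N :: nat and f :: "real \<Rightarrow> real" and x :: "nat \<Rightarrow> nat \<Rightarrow> real"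
    and e :: "nat \<Rightarrow> real" and C :: real and istar :: nat
  assumes "n \<ge> 2" and "s \<ge> 1"
    and f_nonneg: "\<And>t. 0 \<le> t \<Longrightarrow> 0 \<le> f t"
    and f_sup: "superadditive f"
    and cf_fin: "\<exists>c. cf_admissible f s c"
    and x_nonneg: "\<And>j i. j < s \<Longrightarrow> i < n \<Longrightarrow> 0 \<le> x j i"
    and e_pos: "\<And>i. i < n \<Longrightarrow> 0 < e i"
    and istar: "istar < n"
      "\<And>i. i < n \<Longrightarrow> f (\<Sum>j<s. x j i) / e i \<le> f (\<Sum>j<s. x j istar) / e istar"
    and "C > 0"
    and "(\<Sum>i<n. f (\<Sum>j<s. x j i) / e i)
           \<le> (C * (ln (real n))\<^sup>2) * (f (\<Sum>j<s. x j istar) / e istar)"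
    and "f (\<Sum>j<s. x j istar) > 0"
    and "real N \<ge> 32 * C * (ln (real n)) ^ 3 * cf f s / real s"
  shows "measure_pmf.prob (all_SC_pmf n s N f e x) {SC. istar \<in> (\<Union>j<s. SC j)}
           \<ge> 1 - 1 / real n ^ 4"
proof -
  define w where "w j i = f (x j i) / e i" for j i
  define p where "p j = w j istar / (\<Sum>i<n. w j i)" for j
  define L where "L = ln (real n)"
  have L_pos: "0 < L"
    using \<open>n \<ge> 2\<close> by (simp add: L_def)
  have w_nonneg: "0 \<le> w j i" if "j < s" "i < n" for j i
    using f_nonneg x_nonneg e_pos that by (simp add: w_def less_imp_le)
  have p_unit: "0 \<le> p j \<and> p j \<le> 1" if "j < s" for j
  proof -
    have "0 \<le> w j istar" "w j istar \<le> (\<Sum>i<n. w j i)"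
      using w_nonneg[OF that] istar(1) by (auto intro: member_le_sum)
    then show ?thesis
      by (auto simp: p_def divide_le_eq_1)
  qed
  have "real s \<le> cf f s * (C * L\<^sup>2) * (\<Sum>j<s. p j)"
    unfolding p_def w_def L_def by (rule sum_hit_prob_lower_bound) (use assms in auto)
  then have "1 \<le> cf f s * (C * L\<^sup>2) * (\<Sum>j<s. p j) / real s"
    using \<open>s \<ge> 1\<close> by simp
  then have "32 * L * 1 \<le> 32 * L * (cf f s * (C * L\<^sup>2) * (\<Sum>j<s. p j) / real s)"
    using L_pos by (intro mult_left_mono) auto
  then have "real 4 * L \<le> 32 * L * (cf f s * (C * L\<^sup>2) * (\<Sum>j<s. p j) / real s)"
    using L_pos by simp
  also have "\<dots> = 32 * C * L ^ 3 * cf f s / real s * (\<Sum>j<s. p j)"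
    by (simp add: power2_eq_square power3_eq_cube)
  also have "\<dots> \<le> real N * (\<Sum>j<s. p j)"
    using assms(13) p_unit by (intro mult_right_mono sum_nonneg) (auto simp: L_def)
  finally have "(\<Prod>j<s. (1 - p j) ^ N) \<le> 1 / real n ^ 4"
    using p_unit \<open>n \<ge> 2\<close> unfolding L_def
    by (intro prod_one_minus_power_le_inverse_power) auto
  moreover have "measure_pmf.prob (all_SC_pmf n s N f e x) {SC. istar \<in> (\<Union>j<s. SC j)}
                   = 1 - (\<Prod>j<s. (1 - p j) ^ N)"
    unfolding all_SC_pmf_def p_def w_def using istar(1) w_nonneg
    by (intro prob_Pi_SC_pmf_hit) (auto simp: w_def)
  ultimately show ?thesis
    by simp
qed

end
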